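(* Let $a, c \in \mathbb{N}$ and $b, d \in \mathbb{Z}$. (i) Suppose $a\neq c$. Then $\chi(G_{a,b,c,d}) \le \left\lceil \frac{\log \alpha\beta}{\log\alpha}\right\rceil$ for any real numbers $1<\alpha<\beta$ satisfying $R_{a,b,c,d}\subseteq (\beta^{-1},\alpha^{-1})\cup(\alpha,\beta)$. (ii) Suppose $a=c$. If there exists a prime $p$ with $v_p(a)>\max\{v_p(b),v_p(d)\}$ and $v_p(b)=v_p(d)$, then $\chi(G_{a,b,c,d})\le p^{v_p(b-d)}(p-1)$. (iii) Suppose $a=c$. If there exists a prime $p$ with $v_p(a)>\max\{v_p(b),v_p(d)\}$ and $v_p(b)\neq v_p(d)$, then $\chi(G_{a,b,c,d})=2$.
   Context: $\mathbb{N}=\{1,2,\dots\}$. For $a,c\in\mathbb{N}$, $b,d\in\mathbb{Z}$, $R_{a,b,c,d} := \left\{ \frac{an+b}{cn+d} : n \in \mathbb{N} \right\} \cap (\mathbb{Q}_{>0}\setminus\{1\})$. For non-empty $R\subseteq\mathbb{Q}_{>0}\setminus\{1\}$, $G(R)$ is the graph with vertex set $\mathbb{N}$ and edge set $\{\{m,n\}: m/n\in R\}$; $G_{a,b,c,d}:=G(R_{a,b,c,d})$. $\chi$ denotes chromatic number, $v_p$ the $p$-adic valuation (with $v_p(0)=\infty$). *)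

theory Defs
  imports "HOL-Analysis.Analysis" "HOL-Computational_Algebra.Computational_Algebra" "HOL-Library.Extended_Nat"
begin

text \<open>The set R_{a,b,c,d} (as a set of rationals); vertices are the positive naturals.
  If c n + d = 0 the quotient is 0 in Isabelle and is thus excluded by the intersection.\<close>
definition Rset :: "nat \<Rightarrow> int \<Rightarrow> nat \<Rightarrow> int \<Rightarrow> rat set" where
  "Rset a b c d =
     {of_int (int a * int n + b) / of_int (int c * int n + d) | n. n \<ge> 1}
     \<inter> {q. q > 0 \<and> q \<noteq> 1}"

definition adjG :: "rat set \<Rightarrow> nat \<Rightarrow> nat \<Rightarrow> bool" where
  "adjG R m n \<longleftrightarrow> m \<ge> 1 \<and> n \<ge> 1 \<and> (of_nat m / of_nat n \<in> R \<or> of_nat n / of_nat m \<in> R)"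

definition colorable :: "rat set \<Rightarrow> nat \<Rightarrow> bool" where
  "colorable R k \<longleftrightarrow> (\<exists>f :: nat \<Rightarrow> nat. (\<forall>n\<ge>1. f n < k) \<and>
      (\<forall>m n. adjG R m n \<longrightarrow> f m \<noteq> f n))"

text \<open>Chromatic number, infinite if no finite colouring exists.\<close>
definition chi :: "rat set \<Rightarrow> enat" where
  "chi R = Inf {enat k | k. colorable R k}"

definition vp :: "nat \<Rightarrow> int \<Rightarrow> enat" where
  "vp p x = (if x = 0 then \<infinity> else enat (multiplicity (int p) x))"

end

theory Submission
  imports Defs "HOL-Number_Theory.Totient"
begin

text \<open>
  (i) Colour \<open>n\<close> by \<open>\<lfloor>log\<^sub>\<alpha> n\<rfloor> mod k\<close> with \<open>k = \<lceil>log\<^sub>\<alpha> (\<alpha>\<beta>)\<rceil>\<close>: a ratio in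
  \<open>(\<alpha>, \<beta>)\<close> raises the integer part of \<open>log\<^sub>\<alpha>\<close> by at least \<open>1\<close> and at most \<open>k - 1\<close>.

  (ii), (iii) An edge is \<open>m (a k + d) = n (a k + b)\<close>, and \<open>v\<^sub>p(a) > v\<^sub>p(b), v\<^sub>p(d)\<close> gives
  \<open>v\<^sub>p(a k + b) = v\<^sub>p(b)\<close>, \<open>v\<^sub>p(a k + d) = v\<^sub>p(d)\<close>, hence \<open>v\<^sub>p(m) - v\<^sub>p(n) = v\<^sub>p(b) - v\<^sub>p(d)\<close>.
  If this difference \<open>\<delta>\<close> is nonzero, the parity of \<open>\<lfloor>v\<^sub>p(n) / |\<delta>|\<rfloor>\<close> is a proper
  2-colouring. If it is zero, \<open>m (b - d) = (m - n)(a k + b)\<close> shows that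
  \<open>v\<^sub>p(m - n) = v\<^sub>p(m) + v\<^sub>p(b - d) - v\<^sub>p(b)\<close>, so the \<open>p\<close>-free parts of adjacent \<open>m\<close>
  and \<open>n\<close> differ modulo \<open>p\<^sup>f\<^sup>+\<^sup>1\<close>, \<open>f = v\<^sub>p(b - d) - v\<^sub>p(b)\<close>; these residues are
  units, and there are \<open>\<phi>(p\<^sup>f\<^sup>+\<^sup>1) = p\<^sup>f (p - 1)\<close> of them.
\<close>

lemma chi_le_if_colorable: "colorable R k \<Longrightarrow> chi R \<le> enat k"
  unfolding chi_def by (auto intro: Inf_lower)

lemma colorableI_ratio:
  assumes "\<And>n. n \<ge> 1 \<Longrightarrow> f n < k"
    and "\<And>m n. m \<ge> 1 \<Longrightarrow> n \<ge> 1 \<Longrightarrow> of_nat m / of_nat n \<in> R \<Longrightarrow> f m \<noteq> f n"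
  shows "colorable R k"
  unfolding colorable_def adjG_def using assms by metis

lemma colorableI_palette:
  assumes "finite S" "card S \<le> k" "\<And>n. n \<ge> 1 \<Longrightarrow> f n \<in> S"
    and "\<And>m n. m \<ge> 1 \<Longrightarrow> n \<ge> 1 \<Longrightarrow> of_nat m / of_nat n \<in> R \<Longrightarrow> f m \<noteq> f n"
  shows "colorable R k"
proof -
  obtain h :: "'a \<Rightarrow> nat" and N where h: "h ` S = {i. i < N}" "inj_on h S"
    using finite_imp_inj_to_nat_seg[OF assms(1)] by blast
  have "N = card S"
    using card_image[OF h(2)] h(1) by simp
  show ?thesis
  proof (rule colorableI_ratio[of "h \<circ> f"])
    show "(h \<circ> f) n < k" if "n \<ge> 1" for n
    proof -
      have "h (f n) \<in> {i. i < N}"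
        using assms(3)[OF that] h(1) by blast
      then show ?thesis
        using assms(2) \<open>N = card S\<close> by simp
    qed
    show "(h \<circ> f) m \<noteq> (h \<circ> f) n" if "m \<ge> 1" "n \<ge> 1" "of_nat m / of_nat n \<in> R" for m n
      using assms(3)[OF that(1)] assms(3)[OF that(2)] assms(4)[OF that] inj_onD[OF h(2)] by auto
  qed
qed

lemma colorable_ge_2_if_adjG:
  assumes "adjG R m n" "colorable R k"
  shows "2 \<le> k"
proof -
  obtain f :: "nat \<Rightarrow> nat" where "\<forall>n\<ge>1. f n < k" "\<forall>m n. adjG R m n \<longrightarrow> f m \<noteq> f n"
    using assms(2) unfolding colorable_def by blast
  moreover have "m \<ge> 1" "n \<ge> 1"
    using assms(1) unfolding adjG_def by auto
  ultimately have "f m < k" "f n < k" "f m \<noteq> f n"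
    using assms(1) by auto
  then show ?thesis by presburger
qed

lemma chi_eq_2I:
  assumes "colorable R 2" "adjG R m n"
  shows "chi R = 2"
proof (rule antisym)
  show "chi R \<le> 2"
    using chi_le_if_colorable[OF assms(1)] by (simp add: numeral_eq_enat)
  show "2 \<le> chi R"
    unfolding chi_def using colorable_ge_2_if_adjG[OF assms(2)]
    by (auto intro!: Inf_greatest simp: numeral_eq_enat)
qed

lemma mod_neq_if_diff_less:
  fixes i j k :: nat
  assumes "i < j" "j < i + k"
  shows "j mod k \<noteq> i mod k"
proof
  assume "j mod k = i mod k"
  then have "k dvd j - i"
    using assms(1) by (simp add: mod_eq_dvd_iff_nat)
  moreover have "0 < j - i" "j - i < k"
    using assms by auto
  ultimately show False
    using nat_dvd_not_less by blast
qed

lemma colorable_if_ratios_in_annulus: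
  fixes \<alpha> \<beta> :: real
  assumes "1 < \<alpha>" "\<alpha> < \<beta>"
    and annulus: "\<forall>q\<in>R. (inverse \<beta> < of_rat q \<and> of_rat q < inverse \<alpha>) \<or> (\<alpha> < of_rat q \<and> of_rat q < \<beta>)"
  shows "colorable R (nat \<lceil>ln (\<alpha> * \<beta>) / ln \<alpha>\<rceil>)"
proof -
  define k where "k = nat \<lceil>ln (\<alpha> * \<beta>) / ln \<alpha>\<rceil>"
  define f where "f n = nat \<lfloor>log \<alpha> (real n)\<rfloor> mod k" for n :: nat
  have "ln (\<alpha> * \<beta>) / ln \<alpha> = 1 + log \<alpha> \<beta>"
    using assms(1,2) by (simp add: ln_mult log_def field_simps)
  moreover have "0 < log \<alpha> \<beta>"
    using assms(1,2) by simp
  ultimately have k: "log \<alpha> \<beta> \<le> real k - 1" "k > 0"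
    unfolding k_def by linarith+
  have separated: "f m \<noteq> f n"
    if "n \<ge> 1" "\<alpha> < real m / real n" "real m / real n < \<beta>" for m n :: nat
  proof -
    have "m \<ge> 1"
      using that assms(1) by (cases "m = 0") auto
    then have "log \<alpha> (real m / real n) = log \<alpha> m - log \<alpha> n"
      using that(1) assms(1) by (simp add: log_divide)
    moreover have "1 < log \<alpha> (real m / real n)" "log \<alpha> (real m / real n) < log \<alpha> \<beta>"
      using that assms(1) by (simp_all add: log_less_iff less_log_iff)
    moreover have "0 \<le> log \<alpha> n"
      using that(1) assms(1) by simp
    ultimately have "nat \<lfloor>log \<alpha> n\<rfloor> < nat \<lfloor>log \<alpha> m\<rfloor>"
      "nat \<lfloor>log \<alpha> m\<rfloor> < nat \<lfloor>log \<alpha> n\<rfloor> + k"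
      using k(1) by linarith+
    then show ?thesis
      unfolding f_def by (rule mod_neq_if_diff_less)
  qed
  show ?thesis
    unfolding k_def[symmetric]
  proof (rule colorableI_ratio[of f])
    show "f n < k" for n
      using k(2) by (simp add: f_def)
    fix m n :: nat
    assume mn: "m \<ge> 1" "n \<ge> 1" "of_nat m / of_nat n \<in> R"
    have "of_rat (of_nat m / of_nat n) = real m / real n"
      by (simp add: of_rat_divide)
    then have "(inverse \<beta> < real m / real n \<and> real m / real n < inverse \<alpha>) \<or>
        (\<alpha> < real m / real n \<and> real m / real n < \<beta>)"
      using annulus mn(3) by metis
    then show "f m \<noteq> f n"
    proof
      assume "inverse \<beta> < real m / real n \<and> real m / real n < inverse \<alpha>"
      then have "\<alpha> < real n / real m" "real n / real m < \<beta>"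
        using mn(1,2) assms(1,2) by (auto simp: field_simps)
      then show ?thesis
        using separated[where m = n and n = m] mn(1) by auto
    qed (use separated mn(2) in blast)
  qed
qed

lemma Rset_memE:
  assumes "m \<ge> 1" "n \<ge> 1" "of_nat m / of_nat n \<in> Rset a b c d"
  obtains k :: nat where "int m * (int c * k + d) = int n * (int a * k + b)"
    "int a * k + b \<noteq> 0" "int c * k + d \<noteq> 0"
proof -
  obtain k :: nat where
    k: "(of_nat m / of_nat n :: rat) = of_int (int a * k + b) / of_int (int c * k + d)"
    and pos: "(of_nat m / of_nat n :: rat) > 0"
    using assms(3) unfolding Rset_def by auto
  define X where "X = int a * k + b"
  define Y where "Y = int c * k + d"
  have "(0::rat) < of_int X / of_int Y"
    using pos unfolding k X_def Y_def .
  then have nonzero: "X \<noteq> 0" "Y \<noteq> 0"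
    by (metis div_0 div_by_0 of_int_0 less_irrefl)+
  have "(of_nat m / of_nat n :: rat) = of_int X / of_int Y"
    unfolding k X_def Y_def ..
  then have "(of_nat m * of_int Y :: rat) = of_int X * of_nat n"
    using nonzero assms(2) by (simp add: frac_eq_eq)
  then have "int m * Y = int n * X"
    by (metis of_int_eq_iff of_int_mult of_int_of_nat_eq mult.commute)
  then show ?thesis
    using that nonzero unfolding X_def Y_def by blast
qed

lemma multiplicity_add_eq_right:
  fixes p x y :: "'a :: factorial_ring_gcd"
  assumes "prime p" "y \<noteq> 0" "p ^ Suc (multiplicity p y) dvd x"
  shows "multiplicity p (x + y) = multiplicity p y"
proof (rule multiplicity_eqI)
  show "p ^ multiplicity p y dvd x + y"
    using dvd_trans[OF le_imp_power_dvd[of _ "Suc (multiplicity p y)"] assms(3)]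
      multiplicity_dvd[of p y] by (simp add: dvd_add)
  show "\<not> p ^ Suc (multiplicity p y) dvd x + y"
  proof
    assume "p ^ Suc (multiplicity p y) dvd x + y"
    then have "p ^ Suc (multiplicity p y) dvd y"
      using assms(3) by (metis add_diff_cancel_left' dvd_diff)
    then have "Suc (multiplicity p y) \<le> multiplicity p y"
      using assms(1,2) by (intro multiplicity_geI) (auto dest: not_prime_unit)
    then show False
      by simp
  qed
qed

lemma vp_gt_maxD:
  assumes "max (vp p b) (vp p d) < vp p x" "x \<noteq> 0"
  shows "b \<noteq> 0" "d \<noteq> 0"
    "multiplicity (int p) b < multiplicity (int p) x" "multiplicity (int p) d < multiplicity (int p) x"
  using assms by (auto simp: vp_def split: if_splits)

lemma Rset_edge_multiplicity:
  assumes "prime p" "a \<ge> 1" "max (vp p b) (vp p d) < vp p (int a)"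
    and "m \<ge> 1" "n \<ge> 1" "of_nat m / of_nat n \<in> Rset a b a d"
  obtains k :: int where "int m * (int a * k + d) = int n * (int a * k + b)" "int a * k + b \<noteq> 0"
    "multiplicity (int p) (int a * k + b) = multiplicity (int p) b"
    "multiplicity (int p) (int m) + multiplicity (int p) d
       = multiplicity (int p) (int n) + multiplicity (int p) b"
proof -
  let ?v = "multiplicity (int p)"
  note v = vp_gt_maxD[OF assms(3)]
  have P: "prime (int p)"
    using assms(1) by simp
  obtain k :: nat where k: "int m * (int a * k + d) = int n * (int a * k + b)"
    "int a * k + b \<noteq> 0" "int a * k + d \<noteq> 0"
    using Rset_memE[OF assms(4-6)] by blast
  have shift: "?v (int a * k + y) = ?v y" if "y \<noteq> 0" "?v y < ?v (int a)" for y
  proof (rule multiplicity_add_eq_right[OF P that(1)])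
    have "int p ^ Suc (?v y) dvd int a"
      using that(2) by (intro multiplicity_dvd') simp
    then show "int p ^ Suc (?v y) dvd int a * int k"
      by simp
  qed
  have distrib: "?v (x * y) = ?v x + ?v y" if "x \<noteq> 0" "y \<noteq> 0" for x y
    using P that by (simp add: prime_elem_multiplicity_mult_distrib prime_imp_prime_elem)
  have "int m \<noteq> 0" "int n \<noteq> 0"
    using assms(4,5) by auto
  then have "?v (int m) + ?v (int a * k + d) = ?v (int n) + ?v (int a * k + b)"
    using distrib[of "int m" "int a * k + d"] distrib[of "int n" "int a * k + b"] k by simp
  then show ?thesis
    using that[of "int k"] k shift v assms(2) by simp
qed

lemma div_mod_2_neq_if_diff:
  fixes x y \<delta> :: nat
  assumes "\<delta> > 0" "x = y + \<delta>"
  shows "(x div \<delta>) mod 2 \<noteq> (y div \<delta>) mod 2"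
proof -
  have "x div \<delta> = Suc (y div \<delta>)"
    using assms by simp
  moreover have "Suc t mod 2 \<noteq> t mod 2" for t :: nat
    by presburger
  ultimately show ?thesis
    by metis
qed

lemma colorable_Rset_parity:
  assumes "prime p" "a \<ge> 1" "max (vp p b) (vp p d) < vp p (int a)" "vp p b \<noteq> vp p d"
  shows "colorable (Rset a b a d) 2"
proof -
  let ?v = "multiplicity (int p)"
  have "?v b \<noteq> ?v d"
    using assms(4) vp_gt_maxD[OF assms(3)] assms(2) by (simp add: vp_def)
  define \<delta> where "\<delta> = (if ?v d < ?v b then ?v b - ?v d else ?v d - ?v b)"
  have "\<delta> > 0"
    using \<open>?v b \<noteq> ?v d\<close> by (simp add: \<delta>_def)
  show ?thesis
  proof (rule colorableI_ratio[of "\<lambda>n. (?v (int n) div \<delta>) mod 2"])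
    fix m n :: nat
    assume "m \<ge> 1" "n \<ge> 1" "of_nat m / of_nat n \<in> Rset a b a d"
    then have "?v (int m) + ?v d = ?v (int n) + ?v b"
      using Rset_edge_multiplicity[OF assms(1-3)] by metis
    then have "?v (int m) = ?v (int n) + \<delta> \<or> ?v (int n) = ?v (int m) + \<delta>"
      by (auto simp: \<delta>_def)
    then show "(?v (int m) div \<delta>) mod 2 \<noteq> (?v (int n) div \<delta>) mod 2"
      using div_mod_2_neq_if_diff[OF \<open>\<delta> > 0\<close>] by metis
  qed simp
qed

lemma Rset_has_edge:
  assumes "a \<ge> 1" "b \<noteq> d"
  shows "\<exists>m n. adjG (Rset a b a d) m n"
proof -
  define K :: int where "K = 1 + \<bar>b\<bar> + \<bar>d\<bar>"
  define X where "X = int a * K + b"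
  define Y where "Y = int a * K + d"
  have "int a * K \<ge> K"
    using assms(1) mult_right_mono[of 1 "int a" K] by (simp add: K_def)
  then have "X > 0" "Y > 0" "X \<noteq> Y"
    using assms(2) by (auto simp: X_def Y_def K_def)
  have "int (nat K) = K" "nat K \<ge> 1"
    by (simp_all add: K_def)
  then have "(of_nat (nat X) / of_nat (nat Y) :: rat)
      \<in> {of_int (int a * int n + b) / of_int (int a * int n + d) | n. n \<ge> 1}"
    using \<open>X > 0\<close> \<open>Y > 0\<close> unfolding X_def Y_def by force
  moreover have "(of_nat (nat X) / of_nat (nat Y) :: rat) \<in> {q. q > 0 \<and> q \<noteq> 1}"
    using \<open>X > 0\<close> \<open>Y > 0\<close> \<open>X \<noteq> Y\<close> by simp
  ultimately have "of_nat (nat X) / of_nat (nat Y) \<in> Rset a b a d"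
    unfolding Rset_def by blast
  moreover have "nat X \<ge> 1" "nat Y \<ge> 1"
    using \<open>X > 0\<close> \<open>Y > 0\<close> by auto
  ultimately show ?thesis
    unfolding adjG_def by blast
qed

lemma unit_part_mod_in_totatives:
  fixes x :: int
  assumes "prime p" "x \<noteq> 0"
  shows "nat ((x div int p ^ multiplicity (int p) x) mod int p ^ Suc f) \<in> totatives (p ^ Suc f)"
proof -
  define u where "u = x div int p ^ multiplicity (int p) x"
  define r where "r = u mod int p ^ Suc f"
  have P: "prime (int p)"
    using assms(1) by simp
  have "\<not> int p dvd u"
    unfolding u_def using assms(2) P by (intro multiplicity_decompose) (auto dest: not_prime_unit)
  then have "coprime u (int p)"
    using prime_imp_coprime[OF P] by (simp add: ac_simps)
  then have "coprime u (int p ^ Suc f)"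
    by simp
  moreover have Q: "int p ^ Suc f > 0"
    using assms(1) by (simp add: prime_gt_0_nat)
  moreover have "int p ^ Suc f \<noteq> 0"
    using Q by linarith
  ultimately have "coprime r (int p ^ Suc f)"
    unfolding r_def using coprime_mod_left_iff by blast
  moreover have "0 \<le> r" "r < int p ^ Suc f"
    using Q by (simp_all add: r_def)
  moreover have "r \<noteq> 0"
  proof
    assume "r = 0"
    with \<open>coprime r (int p ^ Suc f)\<close> have "is_unit (int p ^ Suc f)"
      by simp
    then show False
      using P not_prime_unit is_unit_power_iff[of "int p" "Suc f"] by simp
  qed
  ultimately have "coprime (int (nat r)) (int (p ^ Suc f))" "0 < nat r" "nat r \<le> p ^ Suc f"
    by (simp_all add: nat_le_iff)
  then show ?thesis
    unfolding r_def u_def in_totatives_iff coprime_int_iff by simp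
qed

lemma dvd_diff_if_unit_parts_cong:
  fixes p q x y :: int
  assumes "multiplicity p x = multiplicity p y"
    and "(x div p ^ multiplicity p x) mod q = (y div p ^ multiplicity p y) mod q"
  shows "p ^ multiplicity p x * q dvd x - y"
proof -
  let ?s = "multiplicity p x"
  have "x = p ^ ?s * (x div p ^ ?s)" "y = p ^ ?s * (y div p ^ ?s)"
    using multiplicity_dvd[of p x] multiplicity_dvd[of p y] assms(1) by simp_all
  moreover have "q dvd x div p ^ ?s - y div p ^ ?s"
    using assms by (simp add: mod_eq_dvd_iff)
  ultimately show ?thesis
    by (metis mult_dvd_mono dvd_refl right_diff_distrib)
qed

lemma Rset_edge_unit_parts_not_cong:
  assumes p: "prime p" and "a \<ge> 1" and v: "max (vp p b) (vp p d) < vp p (int a)"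
    and "vp p b = vp p d" "b \<noteq> d"
    and mn: "m \<ge> 1" "n \<ge> 1" "of_nat m / of_nat n \<in> Rset a b a d"
  defines "Q \<equiv> int p ^ Suc (multiplicity (int p) (b - d) - multiplicity (int p) b)"
  shows "(int m div int p ^ multiplicity (int p) (int m)) mod Q
    \<noteq> (int n div int p ^ multiplicity (int p) (int n)) mod Q"
proof
  let ?v = "multiplicity (int p)"
  define e where "e = ?v b"
  define g where "g = ?v (b - d)"
  have P: "prime (int p)"
    using p by simp
  have "?v d = e"
    using assms(4) vp_gt_maxD[OF v] assms(2) by (simp add: vp_def e_def)
  have "int p ^ e dvd b - d"
    using multiplicity_dvd[of "int p" b] multiplicity_dvd[of "int p" d] \<open>?v d = e\<close>
    by (simp add: e_def dvd_diff)
  then have "e \<le> g"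
    unfolding g_def using assms(5) P by (intro multiplicity_geI) (auto dest: not_prime_unit)
  obtain k where k: "int m * (int a * k + d) = int n * (int a * k + b)" "int a * k + b \<noteq> 0"
    "?v (int a * k + b) = e" "?v (int m) + e = ?v (int n) + e"
    using Rset_edge_multiplicity[OF p assms(2) v mn] \<open>?v d = e\<close> unfolding e_def by metis
  define s where "s = ?v (int m)"
  have "?v (int n) = s"
    using k(4) by (simp add: s_def)
  have "int m \<noteq> 0"
    using mn(1) by simp
  have key: "int m * (b - d) = (int m - int n) * (int a * k + b)"
    using k(1) by (simp add: algebra_simps)
  then have "int m - int n \<noteq> 0"
    using \<open>int m \<noteq> 0\<close> assms(5) by auto
  have "?v (int m * (b - d)) = s + g"
    using P \<open>int m \<noteq> 0\<close> assms(5)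
    by (simp add: s_def g_def prime_elem_multiplicity_mult_distrib prime_imp_prime_elem)
  moreover have "?v ((int m - int n) * (int a * k + b)) = ?v (int m - int n) + e"
    using P \<open>int m - int n \<noteq> 0\<close> k(2,3)
    by (simp add: prime_elem_multiplicity_mult_distrib prime_imp_prime_elem)
  ultimately have "?v (int m - int n) + e = s + g"
    using key by simp
  assume "(int m div int p ^ ?v (int m)) mod Q = (int n div int p ^ ?v (int n)) mod Q"
  then have "int p ^ s * Q dvd int m - int n"
    using dvd_diff_if_unit_parts_cong[of "int p" "int m" "int n"] \<open>?v (int n) = s\<close>
    by (simp add: s_def)
  then have "s + Suc (g - e) \<le> ?v (int m - int n)"
    using \<open>int m - int n \<noteq> 0\<close> P
    by (intro multiplicity_geI) (auto simp: Q_def e_def g_def power_add dest: not_prime_unit)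
  then show False
    using \<open>?v (int m - int n) + e = s + g\<close> \<open>e \<le> g\<close> by simp
qed

lemma colorable_Rset_unit_residue:
  assumes p: "prime p" and "a \<ge> 1" and "max (vp p b) (vp p d) < vp p (int a)"
    and "vp p b = vp p d" "b \<noteq> d"
  shows "colorable (Rset a b a d) (p ^ multiplicity (int p) (b - d) * (p - 1))"
proof -
  let ?v = "multiplicity (int p)"
  define f where "f = ?v (b - d) - ?v b"
  define Q where "Q = int p ^ Suc f"
  define col where "col n = nat ((int n div int p ^ ?v (int n)) mod Q)" for n :: nat
  have "Q > 0"
    using p by (simp add: Q_def prime_gt_0_nat)
  have palette: "card (totatives (p ^ Suc f)) \<le> p ^ ?v (b - d) * (p - 1)"
    using totient_prime_power_Suc[OF p, of f] power_increasing[of f "?v (b - d)" p] p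
    by (simp add: totient_def f_def prime_gt_0_nat)
  show ?thesis
  proof (rule colorableI_palette[where f = col, OF finite_totatives palette])
    show "col n \<in> totatives (p ^ Suc f)" if "n \<ge> 1" for n
      unfolding col_def Q_def using unit_part_mod_in_totatives[OF p] that by simp
    show "col m \<noteq> col n" if "m \<ge> 1" "n \<ge> 1" "of_nat m / of_nat n \<in> Rset a b a d" for m n
      using Rset_edge_unit_parts_not_cong[OF assms that] \<open>Q > 0\<close>
      unfolding col_def Q_def f_def by (simp add: eq_nat_nat_iff)
  qed
qed

theorem theorem2p1:
  fixes a c :: nat and b d :: int
  assumes "a \<ge> 1" and "c \<ge> 1"
  shows
   "(a \<noteq> c \<longrightarrow> (\<forall>\<alpha> \<beta> :: real. 1 < \<alpha> \<and> \<alpha> < \<beta> \<and>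
        (\<forall>q \<in> Rset a b c d. (inverse \<beta> < of_rat q \<and> of_rat q < inverse \<alpha>) \<or>
                             (\<alpha> < of_rat q \<and> of_rat q < \<beta>))
        \<longrightarrow> chi (Rset a b c d) \<le> enat (nat \<lceil>ln (\<alpha> * \<beta>) / ln \<alpha>\<rceil>)))
  \<and> (a = c \<longrightarrow> (\<forall>p. prime p \<and> vp p (int a) > max (vp p b) (vp p d) \<and> vp p b = vp p d
        \<longrightarrow> chi (Rset a b c d) \<le>
              (if b = d then \<infinity> else enat (p ^ multiplicity (int p) (b - d) * (p - 1)))))
  \<and> (a = c \<longrightarrow> (\<forall>p. prime p \<and> vp p (int a) > max (vp p b) (vp p d) \<and> vp p b \<noteq> vp p d
        \<longrightarrow> chi (Rset a b c d) = 2))"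
proof (intro conjI impI allI)
  fix \<alpha> \<beta> :: real
  assume "1 < \<alpha> \<and> \<alpha> < \<beta> \<and>
    (\<forall>q \<in> Rset a b c d. (inverse \<beta> < of_rat q \<and> of_rat q < inverse \<alpha>) \<or> (\<alpha> < of_rat q \<and> of_rat q < \<beta>))"
  then show "chi (Rset a b c d) \<le> enat (nat \<lceil>ln (\<alpha> * \<beta>) / ln \<alpha>\<rceil>)"
    by (intro chi_le_if_colorable colorable_if_ratios_in_annulus) auto
next
  fix p :: nat
  assume "a = c" and p: "prime p \<and> vp p (int a) > max (vp p b) (vp p d) \<and> vp p b = vp p d"
  show "chi (Rset a b c d) \<le>
      (if b = d then \<infinity> else enat (p ^ multiplicity (int p) (b - d) * (p - 1)))"
  proof (cases "b = d")
    case False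
    with p assms(1) have "colorable (Rset a b a d) (p ^ multiplicity (int p) (b - d) * (p - 1))"
      by (intro colorable_Rset_unit_residue) auto
    with False \<open>a = c\<close> show ?thesis
      by (simp add: chi_le_if_colorable)
  qed simp
next
  fix p :: nat
  assume "a = c" and p: "prime p \<and> vp p (int a) > max (vp p b) (vp p d) \<and> vp p b \<noteq> vp p d"
  then obtain m n where "adjG (Rset a b a d) m n"
    using Rset_has_edge[OF assms(1), of b d] by fastforce
  then show "chi (Rset a b c d) = 2"
    using chi_eq_2I colorable_Rset_parity p assms(1) \<open>a = c\<close> by blast
qed

end
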